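(* Let $f_1,\dots,f_n:\mathbb{R}^d\to\mathbb{R}$ be continuously differentiable, where $f_i$ has ${\bm L}_i$-Lipschitz gradient with ${\bm L}_i\in\mathbb{S}^d_{++}$, and $f=\frac1n\sum_i f_i$. If ${\bm L}\in\mathbb{S}^d_{++}$ satisfies $${\bm L}\,\lambda_{\min}({\bm L})=\frac1n\sum_{i=1}^n\lambda_{\max}({\bm L}_i)\,{\bm L}_i,$$ then $f$ has ${\bm L}$-Lipschitz gradient.
   Context: $\mathbb{S}^d_{++}$: symmetric positive definite matrices; $\|x\|_{\bm M}^2:=x^\top{\bm M}x$; $\lambda_{\max},\lambda_{\min}$: largest/smallest eigenvalue. A differentiable $g$ has ${\bm L}$-Lipschitz gradient if $\|\nabla g(x)-\nabla g(y)\|_{{\bm L}^{-1}}\le\|x-y\|_{\bm L}$ for all $x,y\in\mathbb{R}^d$. *)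

theory Defs
  imports "HOL-Analysis.Analysis"
begin

definition sym_pd :: "real^'n^'n \<Rightarrow> bool" where
  "sym_pd A \<longleftrightarrow> transpose A = A \<and> (\<forall>x. x \<noteq> 0 \<longrightarrow> x \<bullet> (A *v x) > 0)"

definition mnorm :: "real^'n^'n \<Rightarrow> real^'n \<Rightarrow> real" where
  "mnorm M x = sqrt (x \<bullet> (M *v x))"

definition eigvals :: "real^'n^'n \<Rightarrow> real set" where
  "eigvals A = {c. \<exists>v. v \<noteq> 0 \<and> A *v v = c *\<^sub>R v}"

definition lambda_max :: "real^'n^'n \<Rightarrow> real" where
  "lambda_max A = Max (eigvals A)"

definition lambda_min :: "real^'n^'n \<Rightarrow> real" where
  "lambda_min A = Min (eigvals A)"

definition cont_diff1 :: "(real^'n \<Rightarrow> real) \<Rightarrow> bool" where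
  "cont_diff1 g \<longleftrightarrow> (\<exists>G. continuous_on UNIV G \<and>
      (\<forall>x. (g has_derivative (\<lambda>h. G x \<bullet> h)) (at x)))"

definition lipschitz_gradient :: "real^'n^'n \<Rightarrow> (real^'n \<Rightarrow> real) \<Rightarrow> bool" where
  "lipschitz_gradient L g \<longleftrightarrow> (\<exists>G. (\<forall>x. (g has_derivative (\<lambda>h. G x \<bullet> h)) (at x)) \<and>
      (\<forall>x y. mnorm (matrix_inv L) (G x - G y) \<le> mnorm L (x - y)))"

end

theory Submission
  imports Defs
begin

(* Write G for the average of gradients g_i of the f_i, evaluated at two points whose difference
   is D. The Lipschitz hypotheses give |g_i|^2 <= lambda_max(L_i) |g_i|^2_{L_i^-1}
   <= lambda_max(L_i) |D|^2_{L_i}, so by convexity of the squared norm |G|^2 is at most the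
   average of these bounds, which by the defining identity of L equals lambda_min(L) |D|^2_L.
   Finally |G|^2_{L^-1} <= |G|^2 / lambda_min(L). The eigenvalue bounds come from the Rayleigh
   quotient: its maximum over the unit sphere is attained at an eigenvector. *)

lemma symmetric_inner_matrix_commute:
  fixes A :: "real^'n^'n"
  assumes "transpose A = A"
  shows "x \<bullet> (A *v y) = y \<bullet> (A *v x)"
  by (metis assms dot_lmul_matrix inner_commute transpose_matrix_vector)

lemma inner_matrix_add_scaleR:
  fixes A :: "real^'n^'n"
  shows "(v + t *\<^sub>R w) \<bullet> (A *v (v + t *\<^sub>R w)) =
    v \<bullet> (A *v v) + t * (v \<bullet> (A *v w)) + t * (w \<bullet> (A *v v)) + t^2 * (w \<bullet> (A *v w))"
  by (simp add: matrix_vector_right_distrib matrix_vector_mult_scaleR power2_eq_square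
      algebra_simps)

lemma inner_matrix_sum_scaleR:
  fixes M :: "'i \<Rightarrow> real^'n^'n"
  shows "x \<bullet> ((\<Sum>i\<in>I. c i *\<^sub>R M i) *v x) = (\<Sum>i\<in>I. c i * (x \<bullet> (M i *v x)))"
proof (induction I rule: infinite_finite_induct)
  case empty
  then show ?case by (simp add: matrix_vector_mult_def inner_vec_def)
next
  case (insert i I)
  then show ?case
    by (simp add: matrix_vector_mult_add_rdistrib inner_add_right scaleR_matrix_vector_assoc[symmetric])
qed simp

lemma uminus_matrix_vector_mult:
  fixes A :: "real^'n^'m"
  shows "(- A) *v x = - (A *v x)"
  by (simp add: matrix_vector_mult_def vec_eq_iff sum_negf)

lemma eigvals_uminus: "eigvals (- A) = uminus ` eigvals A"
  by (auto simp: eigvals_def uminus_matrix_vector_mult image_iff)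
    (metis minus_minus scaleR_minus_left)+

lemma rayleigh_bound_attained_imp_eigenvector:
  fixes A :: "real^'n^'n"
  assumes sym: "transpose A = A"
    and bound: "\<And>x. x \<bullet> (A *v x) \<le> \<mu> * (x \<bullet> x)"
    and attained: "v \<bullet> (A *v v) = \<mu> * (v \<bullet> v)"
  shows "A *v v = \<mu> *\<^sub>R v"
proof (rule ccontr)
  define w where "w = \<mu> *\<^sub>R v - A *v v"
  define q where "q z = \<mu> * (z \<bullet> z) - z \<bullet> (A *v z)" for z
  assume "A *v v \<noteq> \<mu> *\<^sub>R v"
  then have w_pos: "w \<bullet> w > 0" by (simp add: w_def)
  have q_nonneg: "q z \<ge> 0" for z using bound[of z] by (simp add: q_def)
  have "q (v + t *\<^sub>R w) = q v + 2 * t * (w \<bullet> (\<mu> *\<^sub>R v - A *v v)) + t^2 * q w" for t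
    using symmetric_inner_matrix_commute[OF sym, of v w]
    by (simp add: q_def inner_matrix_add_scaleR inner_commute algebra_simps power2_eq_square)
  then have q_line: "q (v + t *\<^sub>R w) = 2 * t * (w \<bullet> w) + t^2 * q w" for t
    using attained by (simp add: q_def w_def)
  \<comment> \<open>v minimises q \<ge> 0, yet q decreases from v in the direction -w.\<close>
  define t where "t = - (w \<bullet> w) / (q w + 1)"
  have "2 * t * (w \<bullet> w) + t^2 * q w = (w \<bullet> w)^2 * (- q w - 2) / (q w + 1)^2"
    using q_nonneg[of w] by (simp add: t_def divide_simps power2_eq_square) (simp add: algebra_simps)
  also have "\<dots> < 0"
    using w_pos q_nonneg[of w] by (intro divide_neg_pos mult_pos_neg) auto
  finally show False using q_nonneg[of "v + t *\<^sub>R w"] q_line[of t] by linarith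
qed

lemma symmetric_rayleigh_max_eigenvector:
  fixes A :: "real^'n^'n"
  assumes sym: "transpose A = A"
  obtains \<mu> v where "v \<noteq> 0" "A *v v = \<mu> *\<^sub>R v" "\<And>x. x \<bullet> (A *v x) \<le> \<mu> * (x \<bullet> x)"
proof -
  have "\<exists>v\<in>sphere 0 1. \<forall>y\<in>sphere 0 1. y \<bullet> (A *v y) \<le> v \<bullet> (A *v v)"
    by (rule continuous_attains_sup)
      (auto intro!: continuous_on_inner[OF continuous_on_id
        linear_continuous_on[OF matrix_vector_mul_bounded_linear]])
  then obtain v where v1: "norm v = 1"
    and v_max: "\<And>y. norm y = 1 \<Longrightarrow> y \<bullet> (A *v y) \<le> v \<bullet> (A *v v)"
    by auto
  define \<mu> where "\<mu> = v \<bullet> (A *v v)"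
  have bound: "x \<bullet> (A *v x) \<le> \<mu> * (x \<bullet> x)" for x
  proof (cases "x = 0")
    case False
    define y where "y = (1 / norm x) *\<^sub>R x"
    have "(x \<bullet> (A *v x)) / (norm x)^2 = y \<bullet> (A *v y)"
      by (simp add: y_def matrix_vector_mult_scaleR power2_eq_square)
    also have "\<dots> \<le> \<mu>"
      using v_max[of y] False by (simp add: y_def \<mu>_def)
    finally show ?thesis
      using False by (simp add: divide_le_eq power2_norm_eq_inner mult.commute)
  qed simp
  have "v \<bullet> (A *v v) = \<mu> * (v \<bullet> v)"
    using v1 by (simp add: \<mu>_def norm_eq_sqrt_inner)
  then have "A *v v = \<mu> *\<^sub>R v"
    using rayleigh_bound_attained_imp_eigenvector[OF sym bound] by blast
  moreover have "v \<noteq> 0" using v1 by auto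
  ultimately show thesis using that bound by blast
qed

lemma symmetric_eigenvectors_orthogonal:
  fixes A :: "real^'n^'n"
  assumes sym: "transpose A = A"
    and u: "A *v u = c *\<^sub>R u" and v: "A *v v = d *\<^sub>R v" and "c \<noteq> d"
  shows "u \<bullet> v = 0"
proof -
  have "c * (u \<bullet> v) = v \<bullet> (A *v u)" using u by (simp add: inner_commute)
  also have "\<dots> = u \<bullet> (A *v v)" by (rule symmetric_inner_matrix_commute[OF sym])
  also have "\<dots> = d * (u \<bullet> v)" using v by simp
  finally show ?thesis using \<open>c \<noteq> d\<close> by simp
qed

lemma finite_eigvals_symmetric:
  fixes A :: "real^'n^'n"
  assumes sym: "transpose A = A"
  shows "finite (eigvals A)"
proof -
  define e where "e c = (SOME v. v \<noteq> 0 \<and> A *v v = c *\<^sub>R v)" for c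
  have e: "e c \<noteq> 0" "A *v e c = c *\<^sub>R e c" if "c \<in> eigvals A" for c
    using someI_ex[of "\<lambda>v. v \<noteq> 0 \<and> A *v v = c *\<^sub>R v"] that
    by (auto simp: e_def eigvals_def)
  have e_orth: "e c \<bullet> e d = 0" if "c \<in> eigvals A" "d \<in> eigvals A" "c \<noteq> d" for c d
    using symmetric_eigenvectors_orthogonal[OF sym e(2) e(2)] that by blast
  have "inj_on e (eigvals A)"
    by (rule inj_onI) (metis e_orth e(1) inner_eq_zero_iff)
  moreover have "independent (e ` eigvals A)"
    by (rule pairwise_orthogonal_independent)
      (auto simp: pairwise_def orthogonal_def intro: e_orth dest: e(1))
  ultimately show ?thesis
    using independent_imp_finite finite_imageD by blast
qed

lemma eigval_le_rayleigh_bound: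
  fixes A :: "real^'n^'n"
  assumes bound: "\<And>x. x \<bullet> (A *v x) \<le> \<mu> * (x \<bullet> x)" and "c \<in> eigvals A"
  shows "c \<le> \<mu>"
proof -
  obtain u where "u \<noteq> 0" "A *v u = c *\<^sub>R u"
    using \<open>c \<in> eigvals A\<close> unfolding eigvals_def by blast
  then show ?thesis using bound[of u] by simp
qed

lemma lambda_max_symmetric:
  fixes A :: "real^'n^'n"
  assumes sym: "transpose A = A"
  shows "lambda_max A \<in> eigvals A" and "x \<bullet> (A *v x) \<le> lambda_max A * (x \<bullet> x)"
proof -
  obtain \<mu> v where v: "v \<noteq> 0" "A *v v = \<mu> *\<^sub>R v"
    and bound: "\<And>x. x \<bullet> (A *v x) \<le> \<mu> * (x \<bullet> x)"
    using symmetric_rayleigh_max_eigenvector[OF sym] by blast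
  have "\<mu> \<in> eigvals A" using v unfolding eigvals_def by blast
  moreover have "lambda_max A = \<mu>"
    unfolding lambda_max_def using calculation finite_eigvals_symmetric[OF sym]
    by (intro Max_eqI) (auto intro: eigval_le_rayleigh_bound[OF bound])
  ultimately show "lambda_max A \<in> eigvals A" and "x \<bullet> (A *v x) \<le> lambda_max A * (x \<bullet> x)"
    using bound by simp_all
qed

lemma lambda_min_symmetric:
  fixes A :: "real^'n^'n"
  assumes sym: "transpose A = A"
  shows "lambda_min A \<in> eigvals A" and "lambda_min A * (x \<bullet> x) \<le> x \<bullet> (A *v x)"
proof -
  have sym_neg: "transpose (- A) = - A"
    using sym transpose_scalar[of "- 1" A] by simp
  have "eigvals A \<noteq> {}" using lambda_max_symmetric(1)[OF sym] by blast
  then have "lambda_min A = - lambda_max (- A)"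
    using minus_Min_eq_Max[OF finite_eigvals_symmetric[OF sym]]
    unfolding lambda_min_def lambda_max_def eigvals_uminus by linarith
  then show "lambda_min A \<in> eigvals A" and "lambda_min A * (x \<bullet> x) \<le> x \<bullet> (A *v x)"
    using lambda_max_symmetric(1)[OF sym_neg] lambda_max_symmetric(2)[OF sym_neg, of x]
    by (auto simp: eigvals_uminus uminus_matrix_vector_mult)
qed

lemma sym_pd_eigval_pos:
  assumes "sym_pd A" and "c \<in> eigvals A"
  shows "c > 0"
proof -
  obtain u where "u \<noteq> 0" "A *v u = c *\<^sub>R u"
    using \<open>c \<in> eigvals A\<close> unfolding eigvals_def by blast
  then have "c * (u \<bullet> u) > 0" using \<open>sym_pd A\<close> unfolding sym_pd_def by force
  moreover have "u \<bullet> u > 0" using \<open>u \<noteq> 0\<close> by simp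
  ultimately show ?thesis by (simp add: zero_less_mult_iff)
qed

lemma sym_pd_lambda_max_pos: "sym_pd A \<Longrightarrow> lambda_max A > 0"
  by (simp add: sym_pd_def lambda_max_symmetric(1) sym_pd_eigval_pos)

lemma sym_pd_lambda_min_pos: "sym_pd A \<Longrightarrow> lambda_min A > 0"
  by (simp add: sym_pd_def lambda_min_symmetric(1) sym_pd_eigval_pos)

lemma invertible_matrix_mul_matrix_inv:
  fixes A :: "'a::field^'n^'n"
  assumes "invertible A"
  shows "A ** matrix_inv A = mat 1"
  using someI_ex[OF assms[unfolded invertible_def]] unfolding matrix_inv_def by blast

lemma sym_pd_invertible:
  assumes "sym_pd A"
  shows "invertible A"
proof -
  have "x = 0" if "A *v x = 0" for x
    using assms that unfolding sym_pd_def by force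
  then show ?thesis
    using matrix_left_invertible_ker invertible_left_inverse by blast
qed

lemma sym_pd_matrix_inv_right:
  assumes "sym_pd A"
  shows "A *v (matrix_inv A *v v) = v"
  by (simp add: matrix_vector_mul_assoc sym_pd_invertible[OF assms]
      invertible_matrix_mul_matrix_inv)

lemma sym_pd_inner_matrix_inv_lower:
  assumes pd: "sym_pd A"
  shows "v \<bullet> v \<le> lambda_max A * (v \<bullet> (matrix_inv A *v v))"
proof -
  have sym: "transpose A = A" using pd unfolding sym_pd_def by blast
  define \<mu> where "\<mu> = lambda_max A"
  define w where "w = matrix_inv A *v v"
  have Aw: "A *v w = v" using sym_pd_matrix_inv_right[OF pd] by (simp add: w_def)
  have \<mu>_pos: "\<mu> > 0" using sym_pd_lambda_max_pos[OF pd] by (simp add: \<mu>_def)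
  have psd: "z \<bullet> (A *v z) \<ge> 0" for z
    using pd unfolding sym_pd_def by (cases "z = 0") (auto intro: less_imp_le)
  have "0 \<le> (v + (- \<mu>) *\<^sub>R w) \<bullet> (A *v (v + (- \<mu>) *\<^sub>R w))" by (rule psd)
  also have "\<dots> = v \<bullet> (A *v v) - 2 * \<mu> * (v \<bullet> v) + \<mu>^2 * (w \<bullet> v)"
    unfolding inner_matrix_add_scaleR symmetric_inner_matrix_commute[OF sym, of w v] Aw by simp
  also have "\<dots> \<le> \<mu> * (v \<bullet> v) - 2 * \<mu> * (v \<bullet> v) + \<mu>^2 * (w \<bullet> v)"
    using lambda_max_symmetric(2)[OF sym, of v] by (simp add: \<mu>_def)
  finally have "\<mu> * (v \<bullet> v) \<le> \<mu> * (\<mu> * (w \<bullet> v))"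
    by (simp add: power2_eq_square algebra_simps)
  then show ?thesis using \<mu>_pos by (simp add: \<mu>_def w_def inner_commute)
qed

lemma sym_pd_inner_matrix_inv_upper:
  assumes pd: "sym_pd A"
  shows "lambda_min A * (v \<bullet> (matrix_inv A *v v)) \<le> v \<bullet> v"
proof -
  have sym: "transpose A = A" using pd unfolding sym_pd_def by blast
  define m where "m = lambda_min A"
  define u where "u = matrix_inv A *v v"
  have m_pos: "m > 0" using sym_pd_lambda_min_pos[OF pd] by (simp add: m_def)
  have rayleigh: "m * (u \<bullet> u) \<le> u \<bullet> v"
    using lambda_min_symmetric(2)[OF sym, of u] sym_pd_matrix_inv_right[OF pd]
    by (simp add: m_def u_def)
  have "m * (u \<bullet> v) \<le> v \<bullet> v"
  proof (cases "u \<bullet> v > 0")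
    case True
    have "(u \<bullet> v) * (m * (u \<bullet> v)) = m * (u \<bullet> v)^2"
      by (simp add: power2_eq_square)
    also have "\<dots> \<le> m * ((u \<bullet> u) * (v \<bullet> v))"
      using Cauchy_Schwarz_ineq m_pos by simp
    also have "\<dots> \<le> (u \<bullet> v) * (v \<bullet> v)"
      using rayleigh by (simp add: mult_right_mono mult.assoc[symmetric])
    finally show ?thesis using True by simp
  next
    case False
    then show ?thesis using m_pos by (smt (verit) inner_ge_zero mult_nonneg_nonpos)
  qed
  then show ?thesis by (simp add: m_def u_def inner_commute)
qed

lemma norm_average_squared_le:
  fixes g :: "nat \<Rightarrow> 'a::real_normed_vector"
  shows "(norm ((1 / real n) *\<^sub>R (\<Sum>i<n. g i)))^2 \<le> (1 / real n) * (\<Sum>i<n. (norm (g i))^2)"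
proof -
  have "(norm ((1 / real n) *\<^sub>R (\<Sum>i<n. g i)))^2 = (1 / real n)^2 * (norm (\<Sum>i<n. g i))^2"
    by (simp add: power_divide)
  also have "\<dots> \<le> (1 / real n)^2 * (\<Sum>i<n. norm (g i))^2"
    by (intro mult_left_mono power_mono norm_sum) auto
  also have "\<dots> \<le> (1 / real n)^2 * ((\<Sum>i<n. (norm (g i))^2) * real n)"
    using sum_squared_le_sum_of_squares[of "\<lambda>i. norm (g i)" "{..<n}"]
    by (intro mult_left_mono) auto
  also have "\<dots> = (1 / real n) * (\<Sum>i<n. (norm (g i))^2)"
    by (cases "n = 0") (simp_all add: power2_eq_square)
  finally show ?thesis .
qed

lemma mnorm_inv_average_le:
  fixes g :: "nat \<Rightarrow> real^'d" and Ls :: "nat \<Rightarrow> real^'d^'d"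
  assumes pd: "\<And>i. i < n \<Longrightarrow> sym_pd (Ls i)" and pdL: "sym_pd L"
    and L_eq: "lambda_min L *\<^sub>R L = (1 / real n) *\<^sub>R (\<Sum>i<n. lambda_max (Ls i) *\<^sub>R Ls i)"
    and g: "\<And>i. i < n \<Longrightarrow> mnorm (matrix_inv (Ls i)) (g i) \<le> mnorm (Ls i) D"
  shows "mnorm (matrix_inv L) ((1 / real n) *\<^sub>R (\<Sum>i<n. g i)) \<le> mnorm L D"
proof -
  define G where "G = (1 / real n) *\<^sub>R (\<Sum>i<n. g i)"
  define m where "m = lambda_min L"
  have g_sq: "(norm (g i))^2 \<le> lambda_max (Ls i) * (D \<bullet> (Ls i *v D))" if "i < n" for i
  proof -
    have "(norm (g i))^2 \<le> lambda_max (Ls i) * (g i \<bullet> (matrix_inv (Ls i) *v g i))"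
      using sym_pd_inner_matrix_inv_lower[OF pd[OF that]] by (simp add: power2_norm_eq_inner)
    also have "\<dots> \<le> lambda_max (Ls i) * (D \<bullet> (Ls i *v D))"
      using g[OF that] sym_pd_lambda_max_pos[OF pd[OF that]] by (simp add: mnorm_def)
    finally show ?thesis .
  qed
  have "m * (G \<bullet> (matrix_inv L *v G)) \<le> (norm G)^2"
    using sym_pd_inner_matrix_inv_upper[OF pdL] by (simp add: m_def power2_norm_eq_inner)
  also have "\<dots> \<le> (1 / real n) * (\<Sum>i<n. (norm (g i))^2)"
    unfolding G_def by (rule norm_average_squared_le)
  also have "\<dots> \<le> (1 / real n) * (\<Sum>i<n. lambda_max (Ls i) * (D \<bullet> (Ls i *v D)))"
    using g_sq by (intro mult_left_mono sum_mono) auto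
  also have "\<dots> = D \<bullet> ((m *\<^sub>R L) *v D)"
    unfolding m_def L_eq by (simp add: scaleR_matrix_vector_assoc[symmetric] inner_matrix_sum_scaleR)
  also have "\<dots> = m * (D \<bullet> (L *v D))"
    by (simp add: scaleR_matrix_vector_assoc[symmetric])
  finally have "G \<bullet> (matrix_inv L *v G) \<le> D \<bullet> (L *v D)"
    using sym_pd_lambda_min_pos[OF pdL] by (simp add: m_def)
  then show ?thesis by (simp add: G_def mnorm_def)
qed

lemma has_derivative_average_inner:
  fixes f :: "nat \<Rightarrow> 'a::real_inner \<Rightarrow> real"
  assumes "\<And>i. i < n \<Longrightarrow> (f i has_derivative (\<lambda>h. G i \<bullet> h)) (at x)"
  shows "((\<lambda>x. (1 / real n) * (\<Sum>i<n. f i x))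
           has_derivative (\<lambda>h. ((1 / real n) *\<^sub>R (\<Sum>i<n. G i)) \<bullet> h)) (at x)"
proof -
  have "((\<lambda>x. (1 / real n) * (\<Sum>i<n. f i x))
          has_derivative (\<lambda>h. (1 / real n) * (\<Sum>i<n. G i \<bullet> h))) (at x)"
    using assms by (intro has_derivative_mult_right has_derivative_sum) auto
  then show ?thesis by (simp add: inner_sum_left)
qed

theorem mainTheorem7:
  fixes fs :: "nat \<Rightarrow> real^'d \<Rightarrow> real"
    and Ls :: "nat \<Rightarrow> real^'d^'d"
    and L :: "real^'d^'d"
    and n :: nat
  assumes "n \<ge> 1"
    and "\<And>i. i < n \<Longrightarrow> cont_diff1 (fs i)"
    and "\<And>i. i < n \<Longrightarrow> sym_pd (Ls i)"
    and "\<And>i. i < n \<Longrightarrow> lipschitz_gradient (Ls i) (fs i)"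
    and "sym_pd L"
    and "lambda_min L *\<^sub>R L = (1 / real n) *\<^sub>R (\<Sum>i<n. lambda_max (Ls i) *\<^sub>R Ls i)"
  shows "lipschitz_gradient L (\<lambda>x. (1 / real n) * (\<Sum>i<n. fs i x))"
proof -
  obtain grad where
    deriv: "\<And>i x. i < n \<Longrightarrow> (fs i has_derivative (\<lambda>h. grad i x \<bullet> h)) (at x)" and
    lip: "\<And>i x y. i < n \<Longrightarrow>
      mnorm (matrix_inv (Ls i)) (grad i x - grad i y) \<le> mnorm (Ls i) (x - y)"
    using assms(4) unfolding lipschitz_gradient_def by metis
  define avg_grad where "avg_grad x = (1 / real n) *\<^sub>R (\<Sum>i<n. grad i x)" for x
  have "((\<lambda>x. (1 / real n) * (\<Sum>i<n. fs i x)) has_derivative (\<lambda>h. avg_grad x \<bullet> h)) (at x)"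
    for x unfolding avg_grad_def using deriv by (rule has_derivative_average_inner)
  moreover have "mnorm (matrix_inv L) (avg_grad x - avg_grad y) \<le> mnorm L (x - y)" for x y
    using mnorm_inv_average_le[OF assms(3,5,6) lip]
    by (simp add: avg_grad_def sum_subtractf scaleR_diff_right)
  ultimately show ?thesis unfolding lipschitz_gradient_def by blast
qed

end
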